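(* For any $\mathfrak{Q}$-distributors $\phi,\psi$ from $X$ to $Y$ between $\mathfrak{Q}$-preordered $\mathfrak{Q}$-subsets, $$\phi=\psi\iff\phi_{\uparrow}=\psi_{\uparrow}\iff\phi^{\downarrow}=\psi^{\downarrow}\iff\phi^{*}=\psi^{*}\iff\phi^{\dagger}=\psi^{\dagger}.$$
   Context: $(\mathfrak{Q},\&,e)$ is a non-trivial unital quantale (complete lattice with associative multiplication with unit $e$ preserving joins in each variable, $\bot<e$), implications $p\& q\le r\iff p\le r/ q\iff q\le p\backslash r$, $\mathcal{D}\mathfrak{Q}(p,q)=\{u\mid (u/ p)\& p=u=q\&(q\backslash u)\}$. A $\mathfrak{Q}$-subset is a set with $|\cdot|\colon X\to\mathfrak{Q}$; $\mathbf{1}_q$ is $\{*\}$ with $|*|=q$. A $\mathfrak{Q}$-relation from $X$ to $Y$ is a map $\phi\colon X\times Y\to\mathfrak{Q}$ with $\phi(x,y)\in\mathcal{D}\mathfrak{Q}(|x|,|y|)$, ordered pointwise; composition $(\psi\circ\phi)(x,z)=\bigvee_y(\psi(y,z)/|y|)\&\phi(x,y)$; $\xi\swarrow\phi$ is the largest $\psi'$ with $\psi'\circ\phi\le\xi$ and $\psi\searrow\xi$ the largest $\phi'$ with $\psi\circ\phi'\le\xi$. A $\mathfrak{Q}$-preordered $\mathfrak{Q}$-subset is a $\mathfrak{Q}$-subset $X$ with a $\mathfrak{Q}$-relation $1_X^{\natural}$ on $X$ with $\mathrm{id}_X\le 1_X^{\natural}$ ($\mathrm{id}_X(x,x)=|x|$,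 else $\bot$) and $1_X^{\natural}\circ 1_X^{\natural}\le 1_X^{\natural}$. A $\mathfrak{Q}$-distributor from $X$ to $Y$ is a $\mathfrak{Q}$-relation $\phi$ with $1_Y^{\natural}\circ\phi\circ 1_X^{\natural}\le\phi$. $\mathsf{P}X$ is the set of $\mathfrak{Q}$-relations $\mu$ from $X$ to some $\mathbf{1}_q$ with $\mu\circ 1_X^{\natural}\le\mu$; $\mathsf{P}^{\dagger}X$ is the set of $\mathfrak{Q}$-relations $\lambda$ from some $\mathbf{1}_q$ to $X$ with $1_X^{\natural}\circ\lambda\le\lambda$. For a $\mathfrak{Q}$-distributor $\phi$ from $X$ to $Y$: $\phi_{\uparrow}\colon\mathsf{P}X\to\mathsf{P}^{\dagger}Y$, $\mu\mapsto\phi\swarrow\mu$; $\phi^{\downarrow}\colon\mathsf{P}^{\dagger}Y\to\mathsf{P}X$, $\lambda'\mapsto\lambda'\searrow\phi$; $\phi^{*}\colon\mathsf{P}Y\to\mathsf{P}X$, $\mu'\mapsto\mu'\circ\phi$; $\phi^{\dagger}\colon\mathsf{P}^{\dagger}X\to\mathsf{P}^{\dagger}Y$, $\lambda\mapsto\phi\circ\lambda$. *)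

theory Defs
  imports Main
begin

definition unital_quantale :: "('q::complete_lattice \<Rightarrow> 'q \<Rightarrow> 'q) \<Rightarrow> 'q \<Rightarrow> bool" where
  "unital_quantale m e \<longleftrightarrow>
     (\<forall>a b c. m (m a b) c = m a (m b c)) \<and>
     (\<forall>a. m e a = a \<and> m a e = a) \<and>
     (\<forall>a S. m a (Sup S) = Sup ((\<lambda>b. m a b) ` S)) \<and>
     (\<forall>a S. m (Sup S) a = Sup ((\<lambda>b. m b a) ` S)) \<and>
     bot < e"

definition rres :: "('q::complete_lattice \<Rightarrow> 'q \<Rightarrow> 'q) \<Rightarrow> 'q \<Rightarrow> 'q \<Rightarrow> 'q" where
  "rres m r q = Sup {p. m p q \<le> r}"

definition lres :: "('q::complete_lattice \<Rightarrow> 'q \<Rightarrow> 'q) \<Rightarrow> 'q \<Rightarrow> 'q \<Rightarrow> 'q" where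
  "lres m p r = Sup {q. m p q \<le> r}"

definition DQ :: "('q::complete_lattice \<Rightarrow> 'q \<Rightarrow> 'q) \<Rightarrow> 'q \<Rightarrow> 'q \<Rightarrow> 'q set" where
  "DQ m p q = {u. m (rres m u p) p = u \<and> u = m q (lres m q u)}"

text \<open>A Q-subset is a carrier set A together with a map h : A -> Q.
  A Q-relation from (A,hA) to (B,hB) is represented extensionally (bot outside carriers).\<close>
definition Qrel :: "('q::complete_lattice \<Rightarrow> 'q \<Rightarrow> 'q) \<Rightarrow> 'a set \<Rightarrow> ('a \<Rightarrow> 'q) \<Rightarrow> 'b set \<Rightarrow> ('b \<Rightarrow> 'q)
   \<Rightarrow> ('a \<Rightarrow> 'b \<Rightarrow> 'q) \<Rightarrow> bool" where
  "Qrel m A hA B hB phi \<longleftrightarrow>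
     (\<forall>x\<in>A. \<forall>y\<in>B. phi x y \<in> DQ m (hA x) (hB y)) \<and>
     (\<forall>x y. x \<notin> A \<or> y \<notin> B \<longrightarrow> phi x y = bot)"

definition Qcomp :: "('q::complete_lattice \<Rightarrow> 'q \<Rightarrow> 'q) \<Rightarrow> 'a set \<Rightarrow> 'b set \<Rightarrow> ('b \<Rightarrow> 'q) \<Rightarrow> 'c set
   \<Rightarrow> ('b \<Rightarrow> 'c \<Rightarrow> 'q) \<Rightarrow> ('a \<Rightarrow> 'b \<Rightarrow> 'q) \<Rightarrow> ('a \<Rightarrow> 'c \<Rightarrow> 'q)" where
  "Qcomp m A B hB C psi phi = (\<lambda>x z. if x \<in> A \<and> z \<in> C
      then Sup {m (rres m (psi y z) (hB y)) (phi x y) | y. y \<in> B} else bot)"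

definition Qid :: "'a set \<Rightarrow> ('a \<Rightarrow> 'q::complete_lattice) \<Rightarrow> 'a \<Rightarrow> 'a \<Rightarrow> 'q" where
  "Qid A h = (\<lambda>x y. if x \<in> A \<and> x = y then h x else bot)"

definition Qpreord :: "('q::complete_lattice \<Rightarrow> 'q \<Rightarrow> 'q) \<Rightarrow> 'a set \<Rightarrow> ('a \<Rightarrow> 'q) \<Rightarrow> ('a \<Rightarrow> 'a \<Rightarrow> 'q) \<Rightarrow> bool" where
  "Qpreord m A h R \<longleftrightarrow> Qrel m A h A h R \<and> Qid A h \<le> R \<and> Qcomp m A A h A R R \<le> R"

definition Qdist :: "('q::complete_lattice \<Rightarrow> 'q \<Rightarrow> 'q) \<Rightarrow> 'a set \<Rightarrow> ('a \<Rightarrow> 'q) \<Rightarrow> ('a \<Rightarrow> 'a \<Rightarrow> 'q)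
   \<Rightarrow> 'b set \<Rightarrow> ('b \<Rightarrow> 'q) \<Rightarrow> ('b \<Rightarrow> 'b \<Rightarrow> 'q) \<Rightarrow> ('a \<Rightarrow> 'b \<Rightarrow> 'q) \<Rightarrow> bool" where
  "Qdist m A hA RA B hB RB phi \<longleftrightarrow> Qrel m A hA B hB phi \<and>
     Qcomp m A B hB B RB (Qcomp m A A hA B phi RA) \<le> phi"

definition Qext :: "('q::complete_lattice \<Rightarrow> 'q \<Rightarrow> 'q) \<Rightarrow> 'a set \<Rightarrow> ('a \<Rightarrow> 'q) \<Rightarrow> 'b set \<Rightarrow> ('b \<Rightarrow> 'q)
   \<Rightarrow> 'c set \<Rightarrow> ('c \<Rightarrow> 'q) \<Rightarrow> ('a \<Rightarrow> 'c \<Rightarrow> 'q) \<Rightarrow> ('a \<Rightarrow> 'b \<Rightarrow> 'q) \<Rightarrow> ('b \<Rightarrow> 'c \<Rightarrow> 'q)" where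
  "Qext m A hA B hB C hC xi phi =
     (GREATEST psi'. Qrel m B hB C hC psi' \<and> Qcomp m A B hB C psi' phi \<le> xi)"

definition Qlift :: "('q::complete_lattice \<Rightarrow> 'q \<Rightarrow> 'q) \<Rightarrow> 'a set \<Rightarrow> ('a \<Rightarrow> 'q) \<Rightarrow> 'b set \<Rightarrow> ('b \<Rightarrow> 'q)
   \<Rightarrow> 'c set \<Rightarrow> ('c \<Rightarrow> 'q) \<Rightarrow> ('b \<Rightarrow> 'c \<Rightarrow> 'q) \<Rightarrow> ('a \<Rightarrow> 'c \<Rightarrow> 'q) \<Rightarrow> ('a \<Rightarrow> 'b \<Rightarrow> 'q)" where
  "Qlift m A hA B hB C hC psi xi =
     (GREATEST phi'. Qrel m A hA B hB phi' \<and> Qcomp m A B hB C psi phi' \<le> xi)"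

text \<open>The one-point Q-subset 1_q is the type unit with carrier UNIV and height q.
  Elements of P X / P^dagger X are pairs (q, mu) recording the codomain/domain 1_q.\<close>
definition PX :: "('q::complete_lattice \<Rightarrow> 'q \<Rightarrow> 'q) \<Rightarrow> 'a set \<Rightarrow> ('a \<Rightarrow> 'q) \<Rightarrow> ('a \<Rightarrow> 'a \<Rightarrow> 'q)
   \<Rightarrow> ('q \<times> ('a \<Rightarrow> unit \<Rightarrow> 'q)) set" where
  "PX m A h R = {(q, mu). Qrel m A h (UNIV::unit set) (\<lambda>_. q) mu \<and>
                          Qcomp m A A h (UNIV::unit set) mu R \<le> mu}"

definition PdX :: "('q::complete_lattice \<Rightarrow> 'q \<Rightarrow> 'q) \<Rightarrow> 'a set \<Rightarrow> ('a \<Rightarrow> 'q) \<Rightarrow> ('a \<Rightarrow> 'a \<Rightarrow> 'q)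
   \<Rightarrow> ('q \<times> (unit \<Rightarrow> 'a \<Rightarrow> 'q)) set" where
  "PdX m A h R = {(q, la). Qrel m (UNIV::unit set) (\<lambda>_. q) A h la \<and>
                          Qcomp m (UNIV::unit set) A h A R la \<le> la}"

definition Qup :: "('q::complete_lattice \<Rightarrow> 'q \<Rightarrow> 'q) \<Rightarrow> 'a set \<Rightarrow> ('a \<Rightarrow> 'q) \<Rightarrow> 'b set \<Rightarrow> ('b \<Rightarrow> 'q)
   \<Rightarrow> ('a \<Rightarrow> 'b \<Rightarrow> 'q) \<Rightarrow> 'q \<times> ('a \<Rightarrow> unit \<Rightarrow> 'q) \<Rightarrow> 'q \<times> (unit \<Rightarrow> 'b \<Rightarrow> 'q)" where
  "Qup m A hA B hB phi = (\<lambda>(q, mu). (q, Qext m A hA (UNIV::unit set) (\<lambda>_. q) B hB phi mu))"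

definition Qdown :: "('q::complete_lattice \<Rightarrow> 'q \<Rightarrow> 'q) \<Rightarrow> 'a set \<Rightarrow> ('a \<Rightarrow> 'q) \<Rightarrow> 'b set \<Rightarrow> ('b \<Rightarrow> 'q)
   \<Rightarrow> ('a \<Rightarrow> 'b \<Rightarrow> 'q) \<Rightarrow> 'q \<times> (unit \<Rightarrow> 'b \<Rightarrow> 'q) \<Rightarrow> 'q \<times> ('a \<Rightarrow> unit \<Rightarrow> 'q)" where
  "Qdown m A hA B hB phi = (\<lambda>(q, la). (q, Qlift m A hA (UNIV::unit set) (\<lambda>_. q) B hB la phi))"

definition Qstar :: "('q::complete_lattice \<Rightarrow> 'q \<Rightarrow> 'q) \<Rightarrow> 'a set \<Rightarrow> 'b set \<Rightarrow> ('b \<Rightarrow> 'q)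
   \<Rightarrow> ('a \<Rightarrow> 'b \<Rightarrow> 'q) \<Rightarrow> 'q \<times> ('b \<Rightarrow> unit \<Rightarrow> 'q) \<Rightarrow> 'q \<times> ('a \<Rightarrow> unit \<Rightarrow> 'q)" where
  "Qstar m A B hB phi = (\<lambda>(q, mu). (q, Qcomp m A B hB (UNIV::unit set) mu phi))"

definition Qdag :: "('q::complete_lattice \<Rightarrow> 'q \<Rightarrow> 'q) \<Rightarrow> 'a set \<Rightarrow> ('a \<Rightarrow> 'q) \<Rightarrow> 'b set
   \<Rightarrow> ('a \<Rightarrow> 'b \<Rightarrow> 'q) \<Rightarrow> 'q \<times> (unit \<Rightarrow> 'a \<Rightarrow> 'q) \<Rightarrow> 'q \<times> (unit \<Rightarrow> 'b \<Rightarrow> 'q)" where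
  "Qdag m A hA B phi = (\<lambda>(q, la). (q, Qcomp m (UNIV::unit set) A hA B phi la))"

end

theory Submission
  imports Defs
begin

(* A distributor absorbs the preorders on both sides: 1_Y o phi = phi = phi o 1_X.
   Hence each of the four maps, evaluated at the representable (co)presheaf of a point,
   returns a row or a column of phi: phi^* and phi^down send the representables at y to the
   column phi(-, y), while phi_up and phi^dagger send the representables at x to the row
   phi(x, -). So each of the four maps determines phi. *)

lemma quantale_mult_mono_right:
  assumes "unital_quantale m e" and "b \<le> c"
  shows "m a b \<le> m a c"
proof -
  have "m a (Sup {b, c}) = Sup (m a ` {b, c})" using assms(1) unfolding unital_quantale_def by blast
  then have "m a c = sup (m a b) (m a c)" using assms(2) by (simp add: sup_absorb2)
  then show ?thesis by (metis sup.cobounded1)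
qed

lemma quantale_mult_mono_left:
  assumes "unital_quantale m e" and "b \<le> c"
  shows "m b a \<le> m c a"
proof -
  have "m (Sup {b, c}) a = Sup ((\<lambda>x. m x a) ` {b, c})" using assms(1) unfolding unital_quantale_def by blast
  then have "m c a = sup (m b a) (m c a)" using assms(2) by (simp add: sup_absorb2)
  then show ?thesis by (metis sup.cobounded1)
qed

lemma le_rres: "m p q \<le> r \<Longrightarrow> p \<le> rres m r q"
  unfolding rres_def by (rule Sup_upper) simp

lemma quantale_le_rres_mult:
  assumes uq: "unital_quantale m e" and "p \<le> r"
  shows "v \<le> m (rres m r p) v"
proof -
  have unit: "m e a = a" for a using uq unfolding unital_quantale_def by blast
  have "e \<le> rres m r p" using assms(2) by (intro le_rres) (simp add: unit)
  then show ?thesis using quantale_mult_mono_left[OF uq, of e _ v] by (simp add: unit)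
qed

lemma DQ_le_rres_mult:
  assumes "unital_quantale m e" and "u \<in> DQ m p q" and "p \<le> r"
  shows "u \<le> m (rres m u p) r"
proof -
  have "u = m (rres m u p) p" using assms(2) unfolding DQ_def by simp
  also have "\<dots> \<le> m (rres m u p) r" using quantale_mult_mono_right[OF assms(1,3)] .
  finally show ?thesis .
qed

lemma Qcomp_term_le:
  assumes "x \<in> A" and "y \<in> B" and "z \<in> C"
  shows "m (rres m (psi y z) (hB y)) (phi x y) \<le> Qcomp m A B hB C psi phi x z"
  using assms unfolding Qcomp_def by (auto intro: Sup_upper)

lemma Qcomp_mono:
  assumes "unital_quantale m e" and "\<And>y. y \<in> B \<Longrightarrow> phi x y \<le> phi' x y"
  shows "Qcomp m A B hB C psi phi x z \<le> Qcomp m A B hB C psi phi' x z"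
  unfolding Qcomp_def
  using assms by (auto intro!: Sup_mono quantale_mult_mono_right)

lemma Qcomp_unit_middle:
  "Qcomp m A (UNIV::unit set) h C psi phi x z =
     (if x \<in> A \<and> z \<in> C then m (rres m (psi () z) (h ())) (phi x ()) else bot)"
proof -
  have "{f y | y::unit. y \<in> UNIV} = {f ()}" for f :: "unit \<Rightarrow> 'q" by auto
  then show ?thesis unfolding Qcomp_def by simp
qed

lemma Qrel_eq_iff_rows:
  assumes "Qrel m A hA B hB phi" and "Qrel m A hA B hB psi"
  shows "phi = psi \<longleftrightarrow> (\<forall>x\<in>A. phi x = psi x)"
  using assms unfolding Qrel_def fun_eq_iff by metis

lemma Qrel_eq_iff_columns:
  assumes "Qrel m A hA B hB phi" and "Qrel m A hA B hB psi"
  shows "phi = psi \<longleftrightarrow> (\<forall>y\<in>B. (\<lambda>x. phi x y) = (\<lambda>x. psi x y))"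
  using assms unfolding Qrel_def fun_eq_iff by metis

lemma Qcomp_id_left_ge:
  assumes uq: "unital_quantale m e" and "Qid B hB \<le> RB" and "x \<in> A" and "y \<in> B"
  shows "xi x y \<le> Qcomp m A B hB B RB xi x y"
proof -
  have "hB y \<le> RB y y" using assms(2,4) by (metis Qid_def le_funD)
  then have "xi x y \<le> m (rres m (RB y y) (hB y)) (xi x y)" by (rule quantale_le_rres_mult[OF uq])
  also have "\<dots> \<le> Qcomp m A B hB B RB xi x y" using assms(3,4) by (simp add: Qcomp_term_le)
  finally show ?thesis .
qed

lemma Qcomp_id_right_ge:
  assumes uq: "unital_quantale m e" and "Qid A hA \<le> RA" and "Qrel m A hA B hB phi"
    and "x \<in> A" and "y \<in> B"
  shows "phi x y \<le> Qcomp m A A hA B phi RA x y"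
proof -
  have "hA x \<le> RA x x" using assms(2,4) by (metis Qid_def le_funD)
  moreover have "phi x y \<in> DQ m (hA x) (hB y)" using assms(3-5) unfolding Qrel_def by blast
  ultimately have "phi x y \<le> m (rres m (phi x y) (hA x)) (RA x x)"
    using DQ_le_rres_mult[OF uq] by blast
  also have "\<dots> \<le> Qcomp m A A hA B phi RA x y" using assms(4,5) by (simp add: Qcomp_term_le)
  finally show ?thesis .
qed

lemma Qdist_comp_right:
  assumes uq: "unital_quantale m e" and "Qpreord m A hA RA" and "Qpreord m B hB RB"
    and "Qdist m A hA RA B hB RB phi" and "x \<in> A" and "y \<in> B"
  shows "Qcomp m A A hA B phi RA x y = phi x y"
proof (rule antisym)
  have "Qcomp m A A hA B phi RA x y \<le> Qcomp m A B hB B RB (Qcomp m A A hA B phi RA) x y"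
    using assms(3,5,6) unfolding Qpreord_def by (blast intro: Qcomp_id_left_ge[OF uq])
  also have "\<dots> \<le> phi x y" using assms(4) unfolding Qdist_def le_fun_def by blast
  finally show "Qcomp m A A hA B phi RA x y \<le> phi x y" .
  show "phi x y \<le> Qcomp m A A hA B phi RA x y"
    using assms(2,4-6) unfolding Qpreord_def Qdist_def by (blast intro: Qcomp_id_right_ge[OF uq])
qed

lemma Qdist_comp_left:
  assumes uq: "unital_quantale m e" and "Qpreord m A hA RA" and "Qpreord m B hB RB"
    and "Qdist m A hA RA B hB RB phi" and "x \<in> A" and "y \<in> B"
  shows "Qcomp m A B hB B RB phi x y = phi x y"
proof (rule antisym)
  have "Qcomp m A B hB B RB phi x y \<le> Qcomp m A B hB B RB (Qcomp m A A hA B phi RA) x y"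
    using Qdist_comp_right[OF assms(1-5)] by (intro Qcomp_mono[OF uq]) simp
  also have "\<dots> \<le> phi x y" using assms(4) unfolding Qdist_def le_fun_def by blast
  finally show "Qcomp m A B hB B RB phi x y \<le> phi x y" .
  show "phi x y \<le> Qcomp m A B hB B RB phi x y"
    using assms(3,5,6) unfolding Qpreord_def by (blast intro: Qcomp_id_left_ge[OF uq])
qed

lemma PX_representable:
  assumes "Qpreord m A h R" and "x \<in> A"
  shows "(h x, \<lambda>a _. R a x) \<in> PX m A h R"
proof -
  have "Qrel m A h A h R" and trans: "Qcomp m A A h A R R \<le> R"
    using assms(1) unfolding Qpreord_def by auto
  then have "Qrel m A h (UNIV::unit set) (\<lambda>_. h x) (\<lambda>a _. R a x)"
    using assms(2) unfolding Qrel_def by auto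
  moreover have "Qcomp m A A h (UNIV::unit set) (\<lambda>a _. R a x) R a u \<le> R a x" for a u
    using le_funD[OF le_funD[OF trans, of a], of x] assms(2) unfolding Qcomp_def by auto
  ultimately show ?thesis unfolding PX_def by (auto simp: le_fun_def)
qed

lemma PdX_representable:
  assumes "Qpreord m A h R" and "x \<in> A"
  shows "(h x, \<lambda>_ a. R x a) \<in> PdX m A h R"
proof -
  have "Qrel m A h A h R" and trans: "Qcomp m A A h A R R \<le> R"
    using assms(1) unfolding Qpreord_def by auto
  then have "Qrel m (UNIV::unit set) (\<lambda>_. h x) A h (\<lambda>_ a. R x a)"
    using assms(2) unfolding Qrel_def by auto
  moreover have "Qcomp m (UNIV::unit set) A h A R (\<lambda>_ a. R x a) u a \<le> R x a" for a u
    using le_funD[OF le_funD[OF trans, of x], of a] assms(2) unfolding Qcomp_def by auto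
  ultimately show ?thesis unfolding PdX_def by (auto simp: le_fun_def)
qed

lemma Qstar_representable:
  assumes "unital_quantale m e" and "Qpreord m A hA RA" and "Qpreord m B hB RB"
    and d: "Qdist m A hA RA B hB RB phi" and y: "y \<in> B"
  shows "Qstar m A B hB phi (hB y, \<lambda>b _. RB b y) = (hB y, \<lambda>a _. phi a y)"
proof -
  have "Qcomp m A B hB (UNIV::unit set) (\<lambda>b _. RB b y) phi a u = phi a y" for a u
  proof (cases "a \<in> A")
    case True
    then have "Qcomp m A B hB (UNIV::unit set) (\<lambda>b _. RB b y) phi a u = Qcomp m A B hB B RB phi a y"
      using y unfolding Qcomp_def by simp
    then show ?thesis using Qdist_comp_left[OF assms(1-4) True y] by simp
  next
    case False
    then show ?thesis using d unfolding Qdist_def Qrel_def Qcomp_def by simp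
  qed
  then show ?thesis unfolding Qstar_def by (simp add: fun_eq_iff)
qed

lemma Qdag_representable:
  assumes "unital_quantale m e" and "Qpreord m A hA RA" and "Qpreord m B hB RB"
    and d: "Qdist m A hA RA B hB RB phi" and x: "x \<in> A"
  shows "Qdag m A hA B phi (hA x, \<lambda>_ a. RA x a) = (hA x, \<lambda>_ b. phi x b)"
proof -
  have "Qcomp m (UNIV::unit set) A hA B phi (\<lambda>_ a. RA x a) u b = phi x b" for u b
  proof (cases "b \<in> B")
    case True
    then have "Qcomp m (UNIV::unit set) A hA B phi (\<lambda>_ a. RA x a) u b = Qcomp m A A hA B phi RA x b"
      using x unfolding Qcomp_def by simp
    then show ?thesis using Qdist_comp_right[OF assms(1-4) x True] by simp
  next
    case False
    then show ?thesis using d unfolding Qdist_def Qrel_def Qcomp_def by simp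
  qed
  then show ?thesis unfolding Qdag_def by (simp add: fun_eq_iff)
qed

lemma Qup_representable:
  fixes phi :: "'a \<Rightarrow> 'b \<Rightarrow> 'q::complete_lattice"
  assumes uq: "unital_quantale m e" and "Qpreord m A hA RA" and "Qpreord m B hB RB"
    and d: "Qdist m A hA RA B hB RB phi" and x: "x \<in> A"
  shows "Qup m A hA B hB phi (hA x, \<lambda>a _. RA a x) = (hA x, \<lambda>_ b. phi x b)"
proof -
  have rel: "Qrel m A hA B hB phi" using d unfolding Qdist_def by blast
  have "Qext m A hA (UNIV::unit set) (\<lambda>_. hA x) B hB phi (\<lambda>a _. RA a x) = (\<lambda>_ b. phi x b)"
    unfolding Qext_def
  proof (rule Greatest_equality, intro conjI le_funI)
    show "Qrel m UNIV (\<lambda>_. hA x) B hB (\<lambda>_ b. phi x b)"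
      using rel x unfolding Qrel_def by auto
    fix a b
    have "m (rres m (phi x b) (hA x)) (RA a x) \<le> phi a b" if "a \<in> A" "b \<in> B"
      using Qcomp_term_le[OF that(1) x that(2), of m phi hA RA] Qdist_comp_right[OF assms(1-4) that] by simp
    then show "Qcomp m A (UNIV::unit set) (\<lambda>_. hA x) B (\<lambda>_ b. phi x b) (\<lambda>a _. RA a x) a b \<le> phi a b"
      by (simp add: Qcomp_unit_middle)
  next
    fix f :: "unit \<Rightarrow> 'b \<Rightarrow> 'q"
    assume f: "Qrel m UNIV (\<lambda>_. hA x) B hB f \<and> Qcomp m A UNIV (\<lambda>_. hA x) B f (\<lambda>a _. RA a x) \<le> phi"
    have "f u b \<le> phi x b" if b: "b \<in> B" for u b
    proof -
      have "hA x \<le> RA x x" using assms(2) x unfolding Qpreord_def by (metis Qid_def le_funD)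
      moreover have "f u b \<in> DQ m (hA x) (hB b)" using f b unfolding Qrel_def by blast
      ultimately have "f u b \<le> m (rres m (f u b) (hA x)) (RA x x)" using DQ_le_rres_mult[OF uq] by blast
      also have "\<dots> = Qcomp m A UNIV (\<lambda>_. hA x) B f (\<lambda>a _. RA a x) x b"
        using x b by (simp add: Qcomp_unit_middle)
      also have "\<dots> \<le> phi x b" using f by (simp add: le_fun_def)
      finally show ?thesis .
    qed
    moreover have "f u b = bot" if "b \<notin> B" for u b using f that unfolding Qrel_def by blast
    ultimately show "f \<le> (\<lambda>_ b. phi x b)" by (intro le_funI) (metis bot.extremum)
  qed
  then show ?thesis unfolding Qup_def by simp
qed

lemma Qdown_representable:
  fixes phi :: "'a \<Rightarrow> 'b \<Rightarrow> 'q::complete_lattice"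
  assumes uq: "unital_quantale m e" and "Qpreord m A hA RA" and "Qpreord m B hB RB"
    and d: "Qdist m A hA RA B hB RB phi" and y: "y \<in> B"
  shows "Qdown m A hA B hB phi (hB y, \<lambda>_ b. RB y b) = (hB y, \<lambda>a _. phi a y)"
proof -
  have rel: "Qrel m A hA B hB phi" using d unfolding Qdist_def by blast
  have "Qlift m A hA (UNIV::unit set) (\<lambda>_. hB y) B hB (\<lambda>_ b. RB y b) phi = (\<lambda>a _. phi a y)"
    unfolding Qlift_def
  proof (rule Greatest_equality, intro conjI le_funI)
    show "Qrel m A hA UNIV (\<lambda>_. hB y) (\<lambda>a _. phi a y)"
      using rel y unfolding Qrel_def by auto
    fix a b
    have "m (rres m (RB y b) (hB y)) (phi a y) \<le> phi a b" if "a \<in> A" "b \<in> B"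
      using Qcomp_term_le[OF that(1) y that(2), of m RB hB phi] Qdist_comp_left[OF assms(1-4) that] by simp
    then show "Qcomp m A (UNIV::unit set) (\<lambda>_. hB y) B (\<lambda>_ b. RB y b) (\<lambda>a _. phi a y) a b \<le> phi a b"
      by (simp add: Qcomp_unit_middle)
  next
    fix f :: "'a \<Rightarrow> unit \<Rightarrow> 'q"
    assume f: "Qrel m A hA UNIV (\<lambda>_. hB y) f \<and> Qcomp m A UNIV (\<lambda>_. hB y) B (\<lambda>_ b. RB y b) f \<le> phi"
    have "f a u \<le> phi a y" if a: "a \<in> A" for a u
    proof -
      have "hB y \<le> RB y y" using assms(3) y unfolding Qpreord_def by (metis Qid_def le_funD)
      then have "f a u \<le> m (rres m (RB y y) (hB y)) (f a u)" by (rule quantale_le_rres_mult[OF uq])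
      also have "\<dots> = Qcomp m A UNIV (\<lambda>_. hB y) B (\<lambda>_ b. RB y b) f a y"
        using a y by (simp add: Qcomp_unit_middle)
      also have "\<dots> \<le> phi a y" using f by (simp add: le_fun_def)
      finally show ?thesis .
    qed
    moreover have "f a u = bot" if "a \<notin> A" for a u using f that unfolding Qrel_def by blast
    ultimately show "f \<le> (\<lambda>a _. phi a y)" by (intro le_funI) (metis bot.extremum)
  qed
  then show ?thesis unfolding Qdown_def by simp
qed

lemma Qup_eq_iff:
  assumes uq: "unital_quantale m e" and pA: "Qpreord m A hA RA" and pB: "Qpreord m B hB RB"
    and d1: "Qdist m A hA RA B hB RB phi" and d2: "Qdist m A hA RA B hB RB psi"
  shows "(\<forall>p\<in>PX m A hA RA. Qup m A hA B hB phi p = Qup m A hA B hB psi p) \<longleftrightarrow> phi = psi"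
proof
  assume H: "\<forall>p\<in>PX m A hA RA. Qup m A hA B hB phi p = Qup m A hA B hB psi p"
  have "phi x = psi x" if x: "x \<in> A" for x
  proof -
    have "Qup m A hA B hB phi (hA x, \<lambda>a _. RA a x) = Qup m A hA B hB psi (hA x, \<lambda>a _. RA a x)"
      using H PX_representable[OF pA x] by blast
    then show ?thesis
      by (simp add: Qup_representable[OF uq pA pB d1 x] Qup_representable[OF uq pA pB d2 x] fun_eq_iff)
  qed
  then show "phi = psi"
    using Qrel_eq_iff_rows d1 d2 unfolding Qdist_def by blast
qed simp

lemma Qdown_eq_iff:
  assumes uq: "unital_quantale m e" and pA: "Qpreord m A hA RA" and pB: "Qpreord m B hB RB"
    and d1: "Qdist m A hA RA B hB RB phi" and d2: "Qdist m A hA RA B hB RB psi"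
  shows "(\<forall>p\<in>PdX m B hB RB. Qdown m A hA B hB phi p = Qdown m A hA B hB psi p) \<longleftrightarrow> phi = psi"
proof
  assume H: "\<forall>p\<in>PdX m B hB RB. Qdown m A hA B hB phi p = Qdown m A hA B hB psi p"
  have "(\<lambda>x. phi x y) = (\<lambda>x. psi x y)" if y: "y \<in> B" for y
  proof -
    have "Qdown m A hA B hB phi (hB y, \<lambda>_ b. RB y b) = Qdown m A hA B hB psi (hB y, \<lambda>_ b. RB y b)"
      using H PdX_representable[OF pB y] by blast
    then show ?thesis
      by (simp add: Qdown_representable[OF uq pA pB d1 y] Qdown_representable[OF uq pA pB d2 y] fun_eq_iff)
  qed
  then show "phi = psi"
    using Qrel_eq_iff_columns d1 d2 unfolding Qdist_def by blast
qed simp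

lemma Qstar_eq_iff:
  assumes uq: "unital_quantale m e" and pA: "Qpreord m A hA RA" and pB: "Qpreord m B hB RB"
    and d1: "Qdist m A hA RA B hB RB phi" and d2: "Qdist m A hA RA B hB RB psi"
  shows "(\<forall>p\<in>PX m B hB RB. Qstar m A B hB phi p = Qstar m A B hB psi p) \<longleftrightarrow> phi = psi"
proof
  assume H: "\<forall>p\<in>PX m B hB RB. Qstar m A B hB phi p = Qstar m A B hB psi p"
  have "(\<lambda>x. phi x y) = (\<lambda>x. psi x y)" if y: "y \<in> B" for y
  proof -
    have "Qstar m A B hB phi (hB y, \<lambda>b _. RB b y) = Qstar m A B hB psi (hB y, \<lambda>b _. RB b y)"
      using H PX_representable[OF pB y] by blast
    then show ?thesis
      by (simp add: Qstar_representable[OF uq pA pB d1 y] Qstar_representable[OF uq pA pB d2 y] fun_eq_iff)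
  qed
  then show "phi = psi"
    using Qrel_eq_iff_columns d1 d2 unfolding Qdist_def by blast
qed simp

lemma Qdag_eq_iff:
  assumes uq: "unital_quantale m e" and pA: "Qpreord m A hA RA" and pB: "Qpreord m B hB RB"
    and d1: "Qdist m A hA RA B hB RB phi" and d2: "Qdist m A hA RA B hB RB psi"
  shows "(\<forall>p\<in>PdX m A hA RA. Qdag m A hA B phi p = Qdag m A hA B psi p) \<longleftrightarrow> phi = psi"
proof
  assume H: "\<forall>p\<in>PdX m A hA RA. Qdag m A hA B phi p = Qdag m A hA B psi p"
  have "phi x = psi x" if x: "x \<in> A" for x
  proof -
    have "Qdag m A hA B phi (hA x, \<lambda>_ a. RA x a) = Qdag m A hA B psi (hA x, \<lambda>_ a. RA x a)"
      using H PdX_representable[OF pA x] by blast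
    then show ?thesis
      by (simp add: Qdag_representable[OF uq pA pB d1 x] Qdag_representable[OF uq pA pB d2 x] fun_eq_iff)
  qed
  then show "phi = psi"
    using Qrel_eq_iff_rows d1 d2 unfolding Qdist_def by blast
qed simp

theorem proposition4p21:
  fixes m :: "'q::complete_lattice \<Rightarrow> 'q \<Rightarrow> 'q" and e :: 'q
    and A :: "'a set" and hA :: "'a \<Rightarrow> 'q" and RA :: "'a \<Rightarrow> 'a \<Rightarrow> 'q"
    and B :: "'b set" and hB :: "'b \<Rightarrow> 'q" and RB :: "'b \<Rightarrow> 'b \<Rightarrow> 'q"
    and phi psi :: "'a \<Rightarrow> 'b \<Rightarrow> 'q"
  assumes "unital_quantale m e"
    and "Qpreord m A hA RA" and "Qpreord m B hB RB"
    and "Qdist m A hA RA B hB RB phi" and "Qdist m A hA RA B hB RB psi"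
  shows "(phi = psi \<longleftrightarrow>
            (\<forall>p\<in>PX m A hA RA. Qup m A hA B hB phi p = Qup m A hA B hB psi p))
       \<and> ((\<forall>p\<in>PX m A hA RA. Qup m A hA B hB phi p = Qup m A hA B hB psi p) \<longleftrightarrow>
            (\<forall>p\<in>PdX m B hB RB. Qdown m A hA B hB phi p = Qdown m A hA B hB psi p))
       \<and> ((\<forall>p\<in>PdX m B hB RB. Qdown m A hA B hB phi p = Qdown m A hA B hB psi p) \<longleftrightarrow>
            (\<forall>p\<in>PX m B hB RB. Qstar m A B hB phi p = Qstar m A B hB psi p))
       \<and> ((\<forall>p\<in>PX m B hB RB. Qstar m A B hB phi p = Qstar m A B hB psi p) \<longleftrightarrow>
            (\<forall>p\<in>PdX m A hA RA. Qdag m A hA B phi p = Qdag m A hA B psi p))"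
  using Qup_eq_iff[OF assms] Qdown_eq_iff[OF assms] Qstar_eq_iff[OF assms] Qdag_eq_iff[OF assms]
  by blast

end
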